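(* Suppose the GIP bounds satisfy, for all $t>0$ and $v_j\in V$, $l_{j,t}\le l_{\min,0}w^t\le\mathbf h_0^T(\mathbf W^t)_{:,j}\le h_{j,t}$, where $l_{\min,0}=\min_j l_{j,0}$, $w=\min_{(i,j):W_{ij}>0}W_{ij}$, $\mathbf h_0=(h_{j,0})_j$ and $(\mathbf W^t)_{:,j}$ is the $j$-th column of $\mathbf W^t$. Let $\gamma\in[0,1)$ with $\gamma>1-1/\rho(\mathbf W)$, let $k\in\{1,\dots,n\}$, and let $\mathbf c=\big((\mathbf I-(1-\gamma)\mathbf W)^{-1}-\mathbf I\big)\mathbf 1$ (the Katz centrality with factor $1-\gamma$). Consider the problem $$\max_{\mathbf x,\mathbf z}\ s(\mathbf x)\quad\text{s.t. } l_{j,0}z_j\le x_j\le h_{j,0}z_j\ \forall j,\ \ \sum_j z_j\le k,\ \ x_j\in\mathbb R,\ z_j\in\{0,1\},$$ where $s(\mathbf x)=\sum_j\sum_{t=1}^\infty(1-\gamma)^t x_j(t)$ with $(\mathbf x(t))$ the GIP trajectory from $\mathbf x(0)=\mathbf x$. Let $\mathcal A\subseteq\{1,\dots,n\}$ with $|\mathcal A|=k$ be such that $h_{i,0}c_i\le h_{j,0}c_j$ for all $i\notin\mathcal A$, $j\in\mathcal A$. Then $x^*_j=h_{j,0}$, $z^*_j=1$ for $j\in\mathcal A$ and $x^*_j=0$, $z^*_j=0$ for $j\notin\mathcal A$ is an optimal solution, and in this regime $s(\mathbf x)=\mathbf c^T\mathbf x$ for every feasible $\mathbf x$.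
   Context: Let $G=(V,E)$ be a directed weighted network with node set $V=\{v_1,\dots,v_n\}$ and weighted adjacency matrix $\mathbf W=(W_{ij})$, where $W_{ij}>0$ if $(v_i,v_j)\in E$ and $W_{ij}=0$ otherwise. The general information propagation (GIP) model with lower bounds $\{l_{j,t}\}$ and upper bounds $\{h_{j,t}\}$ (real numbers with $0\le l_{j,t}\le h_{j,t}$ for all $t\ge 0$, $v_j\in V$, and $l_{j,0}>0$) is the deterministic discrete-time dynamics $$x_j(t)=f_{j,t}\Big(\sum_i W_{ij}x_i(t-1)\Big),\quad t>0,\ v_j\in V,$$ where $f_{j,t}(x)=0$ if $x<l_{j,t}$, $f_{j,t}(x)=x$ if $l_{j,t}\le x<h_{j,t}$, and $f_{j,t}(x)=h_{j,t}$ if $x\ge h_{j,t}$. An initial state $\mathbf x(0)=(x_j(0))$ is admissible if $x_j(0)\in\{0\}\cup[l_{j,0},h_{j,0}]$ for every $j$. $\mathbf 1$ is the all-ones vector, $\mathbf I$ the identity. *)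

theory Defs
  imports "Jordan_Normal_Form.Spectral_Radius" "Jordan_Normal_Form.Gauss_Jordan_Elimination"
begin

text \<open>Nodes are 0..<n; a network is a real n x n weighted adjacency matrix W (W i j >= 0,
  with W i j > 0 exactly on the edges). Bounds l, h are indexed as l j t (node j, time t).\<close>

definition gip_f :: "real \<Rightarrow> real \<Rightarrow> real \<Rightarrow> real" where
  "gip_f lo hi x = (if x < lo then 0 else if x < hi then x else hi)"

fun gip_traj :: "real mat \<Rightarrow> (nat \<Rightarrow> nat \<Rightarrow> real) \<Rightarrow> (nat \<Rightarrow> nat \<Rightarrow> real)
    \<Rightarrow> (nat \<Rightarrow> real) \<Rightarrow> nat \<Rightarrow> nat \<Rightarrow> real" where
  "gip_traj W l h x0 0 = x0"
| "gip_traj W l h x0 (Suc t) =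
     (\<lambda>j. gip_f (l j (Suc t)) (h j (Suc t))
            (\<Sum>i<dim_row W. W $$ (i, j) * gip_traj W l h x0 t i))"

definition gip_score :: "real mat \<Rightarrow> (nat \<Rightarrow> nat \<Rightarrow> real) \<Rightarrow> (nat \<Rightarrow> nat \<Rightarrow> real)
    \<Rightarrow> real \<Rightarrow> (nat \<Rightarrow> real) \<Rightarrow> real" where
  "gip_score W l h \<gamma> x =
     (\<Sum>j<dim_row W. \<Sum>t. (1 - \<gamma>) ^ Suc t * gip_traj W l h x (Suc t) j)"

definition katz :: "real mat \<Rightarrow> real \<Rightarrow> real vec" where
  "katz W \<gamma> = (let n = dim_row W in
     (the (mat_inverse (1\<^sub>m n - (1 - \<gamma>) \<cdot>\<^sub>m W)) - 1\<^sub>m n) *\<^sub>v vec n (\<lambda>_. 1))"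

definition min_edge_weight :: "real mat \<Rightarrow> real" where
  "min_edge_weight W = Min {W $$ (i, j) | i j. i < dim_row W \<and> j < dim_col W \<and> W $$ (i, j) > 0}"

definition gip_feasible :: "nat \<Rightarrow> (nat \<Rightarrow> nat \<Rightarrow> real) \<Rightarrow> (nat \<Rightarrow> nat \<Rightarrow> real)
    \<Rightarrow> nat \<Rightarrow> (nat \<Rightarrow> real) \<Rightarrow> (nat \<Rightarrow> real) \<Rightarrow> bool" where
  "gip_feasible n l h k x z \<longleftrightarrow>
     (\<forall>j<n. l j 0 * z j \<le> x j \<and> x j \<le> h j 0 * z j \<and> z j \<in> {0, 1}) \<and>
     (\<Sum>j<n. z j) \<le> real k"

end

theory Submission
  imports Defs
begin

text \<open>In the regime the thresholds of the dynamics never act. A positive entry of \<open>W^t\<close> is at least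
  \<open>w^t\<close>, so a positive input to node \<open>j\<close> at time \<open>t\<close> is at least \<open>l_min,0 w^t \<ge> l_j,t\<close>, while an
  admissible seed never sends more than \<open>h_0^T (W^t)_:,j \<le> h_j,t\<close>. Hence \<open>x(t) = (W^t)^T x(0)\<close>, and the
  score is the Neumann series \<open>\<Sum>_{t\<ge>1} ((1-\<gamma>) W)^t\<close> applied to the seed, which converges because
  \<open>(1-\<gamma>) \<rho>(W) < 1\<close> and equals \<open>c^T x\<close>. Maximising this nonnegative linear functional over the seeding
  constraints is an exchange argument: seeding the \<open>k\<close> nodes with largest \<open>h_j,0 c_j\<close> at full strength
  is optimal.\<close>

lemma index_mult_mat_lessThan:
  fixes A B :: "'a::comm_semiring_0 mat"
  assumes "A \<in> carrier_mat nr n" "B \<in> carrier_mat n nc" "i < nr" "j < nc"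
  shows "(A * B) $$ (i, j) = (\<Sum>k<n. A $$ (i, k) * B $$ (k, j))"
  using assms by (simp add: scalar_prod_def atLeast0LessThan)

lemma index_pow_mat_Suc:
  fixes A :: "'a::comm_semiring_1 mat"
  assumes "A \<in> carrier_mat n n" "i < n" "j < n"
  shows "(A ^\<^sub>m Suc t) $$ (i, j) = (\<Sum>k<n. (A ^\<^sub>m t) $$ (i, k) * A $$ (k, j))"
  using assms by (simp add: scalar_prod_def atLeast0LessThan)

lemma pow_mat_Suc_left:
  fixes A :: "'a::semiring_1 mat"
  assumes A: "A \<in> carrier_mat n n"
  shows "A ^\<^sub>m Suc t = A * A ^\<^sub>m t"
proof (induction t)
  case 0 then show ?case using A by simp
next
  case (Suc t)
  have "A ^\<^sub>m Suc (Suc t) = (A * A ^\<^sub>m t) * A" using Suc by simp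
  also have "\<dots> = A * (A ^\<^sub>m t * A)"
    by (rule assoc_mult_mat[OF A pow_carrier_mat[OF A] A])
  finally show ?case by simp
qed

lemma pow_mat_smult:
  fixes A :: "'a::comm_semiring_1 mat"
  assumes A: "A \<in> carrier_mat n n"
  shows "(c \<cdot>\<^sub>m A) ^\<^sub>m t = c ^ t \<cdot>\<^sub>m A ^\<^sub>m t"
proof (induction t)
  case 0 then show ?case using A by (auto intro!: eq_matI)
next
  case (Suc t)
  have "(c \<cdot>\<^sub>m A) ^\<^sub>m Suc t = c ^ t \<cdot>\<^sub>m (A ^\<^sub>m t * (c \<cdot>\<^sub>m A))"
    using Suc mult_smult_assoc_mat[OF pow_carrier_mat[OF A] smult_carrier_mat[OF A]] by simp
  also have "\<dots> = c ^ Suc t \<cdot>\<^sub>m A ^\<^sub>m Suc t"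
    using mult_smult_distrib[OF pow_carrier_mat[OF A] A] by (auto intro!: eq_matI simp: ac_simps)
  finally show ?case .
qed

lemma pow_mat_nonneg:
  fixes A :: "'a::linordered_semidom mat"
  assumes A: "A \<in> carrier_mat n n" and nonneg: "\<And>i j. i < n \<Longrightarrow> j < n \<Longrightarrow> 0 \<le> A $$ (i, j)"
    and "i < n" "j < n"
  shows "0 \<le> (A ^\<^sub>m t) $$ (i, j)"
  using assms(4)
proof (induction t arbitrary: j)
  case 0 then show ?case using A \<open>i < n\<close> by simp
next
  case (Suc t) then show ?case
    unfolding index_pow_mat_Suc[OF A \<open>i < n\<close> Suc.prems]
    using nonneg by (auto intro!: sum_nonneg simp del: pow_mat.simps)
qed

lemma sum_pos_ex_pos:
  fixes f :: "'a \<Rightarrow> 'b::linordered_ab_group_add"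
  assumes "0 < sum f S"
  obtains x where "x \<in> S" "0 < f x"
  using assms sum_nonpos[of S f] by (meson not_le)

lemma
  fixes W :: "real mat"
  assumes "W \<in> carrier_mat n n" "i < n" "j < n" "0 < W $$ (i, j)"
  shows min_edge_weight_le: "min_edge_weight W \<le> W $$ (i, j)"
    and min_edge_weight_pos: "0 < min_edge_weight W"
proof -
  let ?E = "{W $$ (i, j) | i j. i < dim_row W \<and> j < dim_col W \<and> W $$ (i, j) > 0}"
  have "?E \<subseteq> (\<lambda>(i, j). W $$ (i, j)) ` ({..<dim_row W} \<times> {..<dim_col W})" by auto
  then have fin: "finite ?E" by (rule finite_subset) auto
  have mem: "W $$ (i, j) \<in> ?E" using assms by auto
  show "min_edge_weight W \<le> W $$ (i, j)"
    unfolding min_edge_weight_def using Min_le[OF fin mem] .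
  show "0 < min_edge_weight W"
    unfolding min_edge_weight_def using fin mem by (subst Min_gr_iff) auto
qed

lemma pow_mat_index_ge_min_edge_weight:
  fixes W :: "real mat"
  assumes W: "W \<in> carrier_mat n n" and nonneg: "\<And>i j. i < n \<Longrightarrow> j < n \<Longrightarrow> 0 \<le> W $$ (i, j)"
    and i: "i < n"
  shows "j < n \<Longrightarrow> 0 < (W ^\<^sub>m t) $$ (i, j) \<Longrightarrow> min_edge_weight W ^ t \<le> (W ^\<^sub>m t) $$ (i, j)"
proof (induction t arbitrary: j)
  case 0 then show ?case using W i by (simp split: if_splits)
next
  case (Suc t)
  let ?P = "W ^\<^sub>m t"
  have Suc_eq: "(W ^\<^sub>m Suc t) $$ (i, j) = (\<Sum>k<n. ?P $$ (i, k) * W $$ (k, j))"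
    using index_pow_mat_Suc[OF W i Suc.prems(1)] .
  with Suc.prems(2) obtain k where k: "k < n" and pos: "0 < ?P $$ (i, k) * W $$ (k, j)"
    by (auto elim: sum_pos_ex_pos)
  have P_nonneg: "\<And>k. k < n \<Longrightarrow> 0 \<le> ?P $$ (i, k)" using pow_mat_nonneg[OF W nonneg i] .
  have "0 < ?P $$ (i, k)" "0 < W $$ (k, j)"
    using pos P_nonneg[OF k] nonneg[OF k Suc.prems(1)] by (auto simp: zero_less_mult_iff)
  note IH = Suc.IH[OF k this(1)]
    and w = min_edge_weight_le[OF W k Suc.prems(1) this(2)] min_edge_weight_pos[OF W k Suc.prems(1) this(2)]
  have "min_edge_weight W ^ Suc t \<le> ?P $$ (i, k) * W $$ (k, j)"
    using mult_mono[OF IH w(1)] w(2) P_nonneg[OF k] by (simp add: mult.commute)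
  also have "\<dots> \<le> (\<Sum>k<n. ?P $$ (i, k) * W $$ (k, j))"
    using k P_nonneg nonneg Suc.prems(1) by (intro member_le_sum) auto
  finally show ?case using Suc_eq by simp
qed

definition gip_admissible :: "nat \<Rightarrow> (nat \<Rightarrow> nat \<Rightarrow> real) \<Rightarrow> (nat \<Rightarrow> nat \<Rightarrow> real)
    \<Rightarrow> (nat \<Rightarrow> real) \<Rightarrow> bool" where
  "gip_admissible n l h x \<longleftrightarrow> (\<forall>j<n. x j = 0 \<or> l j 0 \<le> x j \<and> x j \<le> h j 0)"

text \<open>Only the outer two inequalities of the paper's regime condition are needed.\<close>

definition gip_linear_regime :: "nat \<Rightarrow> real mat \<Rightarrow> (nat \<Rightarrow> nat \<Rightarrow> real) \<Rightarrow> (nat \<Rightarrow> nat \<Rightarrow> real)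
    \<Rightarrow> bool" where
  "gip_linear_regime n W l h \<longleftrightarrow> (\<forall>t>0. \<forall>j<n.
     l j t \<le> Min {l i 0 | i. i < n} * min_edge_weight W ^ t \<and>
     (\<Sum>i<n. h i 0 * (W ^\<^sub>m t) $$ (i, j)) \<le> h j t)"

lemma gip_f_eq_self:
  assumes "x = 0 \<or> lo \<le> x" "x \<le> hi"
  shows "gip_f lo hi x = x"
  using assms unfolding gip_f_def by auto

lemma gip_f_linear_input:
  fixes W :: "real mat"
  assumes W: "W \<in> carrier_mat n n" and W_nonneg: "\<And>i j. i < n \<Longrightarrow> j < n \<Longrightarrow> 0 \<le> W $$ (i, j)"
    and l0_nonneg: "\<And>i. i < n \<Longrightarrow> 0 \<le> l i 0" and h0_nonneg: "\<And>i. i < n \<Longrightarrow> 0 \<le> h i 0"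
    and regime: "gip_linear_regime n W l h" and x: "gip_admissible n l h x"
    and t: "0 < t" and j: "j < n"
  shows "gip_f (l j t) (h j t) (\<Sum>i<n. (W ^\<^sub>m t) $$ (i, j) * x i) = (\<Sum>i<n. (W ^\<^sub>m t) $$ (i, j) * x i)"
    (is "gip_f _ _ ?S = ?S")
proof (rule gip_f_eq_self)
  have x_bounds: "0 \<le> x i" "x i \<le> h i 0" "0 < x i \<Longrightarrow> l i 0 \<le> x i" if "i < n" for i
    using x l0_nonneg[OF that] h0_nonneg[OF that] that unfolding gip_admissible_def by force+
  have P_nonneg: "\<And>i. i < n \<Longrightarrow> 0 \<le> (W ^\<^sub>m t) $$ (i, j)" using pow_mat_nonneg[OF W W_nonneg _ j] .
  have "?S \<le> (\<Sum>i<n. h i 0 * (W ^\<^sub>m t) $$ (i, j))"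
    using P_nonneg x_bounds(2) by (intro sum_mono) (metis lessThan_iff mult.commute mult_right_mono)
  also have "\<dots> \<le> h j t" using regime t j unfolding gip_linear_regime_def by blast
  finally show "?S \<le> h j t" .
  show "?S = 0 \<or> l j t \<le> ?S"
  proof (cases "0 < ?S")
    case True
    then obtain i where i: "i < n" and pos: "0 < (W ^\<^sub>m t) $$ (i, j) * x i"
      by (auto elim: sum_pos_ex_pos)
    then have P_pos: "0 < (W ^\<^sub>m t) $$ (i, j)" and x_pos: "0 < x i"
      using P_nonneg[OF i] x_bounds(1)[OF i] by (auto simp: zero_less_mult_iff)
    let ?L = "Min {l i 0 | i. i < n}"
    have L_fin: "finite {l i 0 | i. i < n}" by simp
    have L_le: "?L \<le> l i 0" using Min_le[OF L_fin] i by blast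
    have L_nonneg: "0 \<le> ?L" using Min_in[OF L_fin] i l0_nonneg by force
    have "l j t \<le> ?L * min_edge_weight W ^ t" using regime t j unfolding gip_linear_regime_def by blast
    also have "\<dots> \<le> ?L * (W ^\<^sub>m t) $$ (i, j)"
      using pow_mat_index_ge_min_edge_weight[OF W W_nonneg i j P_pos] L_nonneg by (rule mult_left_mono)
    also have "\<dots> \<le> x i * (W ^\<^sub>m t) $$ (i, j)"
      using L_le x_bounds(3)[OF i x_pos] P_pos by (intro mult_right_mono) auto
    also have "\<dots> \<le> ?S"
      using i P_nonneg x_bounds(1) by (subst mult.commute) (intro member_le_sum; simp)
    finally show ?thesis by blast
  next
    case False
    moreover have "0 \<le> ?S" using P_nonneg x_bounds(1) by (auto intro!: sum_nonneg)
    ultimately show ?thesis by linarith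
  qed
qed

lemma gip_traj_linear:
  fixes W :: "real mat"
  assumes W: "W \<in> carrier_mat n n" and W_nonneg: "\<And>i j. i < n \<Longrightarrow> j < n \<Longrightarrow> 0 \<le> W $$ (i, j)"
    and l0_nonneg: "\<And>i. i < n \<Longrightarrow> 0 \<le> l i 0" and h0_nonneg: "\<And>i. i < n \<Longrightarrow> 0 \<le> h i 0"
    and regime: "gip_linear_regime n W l h" and x: "gip_admissible n l h x"
  shows "j < n \<Longrightarrow> gip_traj W l h x t j = (\<Sum>i<n. (W ^\<^sub>m t) $$ (i, j) * x i)"
proof (induction t arbitrary: j)
  case 0 then show ?case using W by (simp add: if_distrib[of "\<lambda>c. c * _"] cong: if_cong)
next
  case (Suc t)
  have "(\<Sum>k<dim_row W. W $$ (k, j) * gip_traj W l h x t k)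
      = (\<Sum>k<n. W $$ (k, j) * (\<Sum>i<n. (W ^\<^sub>m t) $$ (i, k) * x i))"
    using W Suc.IH by simp
  also have "\<dots> = (\<Sum>k<n. \<Sum>i<n. (W ^\<^sub>m t) $$ (i, k) * W $$ (k, j) * x i)"
    by (simp add: sum_distrib_left ac_simps)
  also have "\<dots> = (\<Sum>i<n. (\<Sum>k<n. (W ^\<^sub>m t) $$ (i, k) * W $$ (k, j)) * x i)"
    by (subst sum.swap) (simp add: sum_distrib_right)
  also have "\<dots> = (\<Sum>i<n. (W ^\<^sub>m Suc t) $$ (i, j) * x i)"
    using index_pow_mat_Suc[OF W _ Suc.prems] by simp
  finally show ?case
    using gip_f_linear_input[OF W W_nonneg l0_nonneg h0_nonneg regime x _ Suc.prems, of "Suc t"]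
    by (simp del: pow_mat.simps)
qed

lemma spectral_radius_smult_le:
  assumes A: "A \<in> carrier_mat n n" and n: "0 < n" and c: "c \<noteq> 0"
  shows "spectral_radius (c \<cdot>\<^sub>m A) \<le> norm c * spectral_radius A"
proof -
  have cA: "c \<cdot>\<^sub>m A \<in> carrier_mat n n" using A by simp
  obtain \<mu> where \<mu>: "\<mu> \<in> spectrum (c \<cdot>\<^sub>m A)" and rho: "spectral_radius (c \<cdot>\<^sub>m A) = norm \<mu>"
    using spectral_radius_mem_max(1)[OF cA n] by auto
  then obtain v where v: "v \<in> carrier_vec n" "v \<noteq> 0\<^sub>v n" and ev: "(c \<cdot>\<^sub>m A) *\<^sub>v v = \<mu> \<cdot>\<^sub>v v"
    unfolding spectrum_def eigenvalue_def eigenvector_def using A by auto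
  have "A *\<^sub>v v = (\<mu> / c) \<cdot>\<^sub>v v"
  proof (rule eq_vecI)
    fix i assume "i < dim_vec ((\<mu> / c) \<cdot>\<^sub>v v)"
    then have i: "i < n" using v by simp
    have "c * (row A i \<bullet> v) = \<mu> * v $ i"
      using arg_cong[OF ev, of "\<lambda>w. w $ i"] i A v by simp
    then show "(A *\<^sub>v v) $ i = ((\<mu> / c) \<cdot>\<^sub>v v) $ i"
      using i A v c by (simp add: field_simps)
  qed (use A v in simp)
  then have "\<mu> / c \<in> spectrum A"
    unfolding spectrum_def eigenvalue_def eigenvector_def using A v by auto
  then have "norm (\<mu> / c) \<le> spectral_radius A"
    using spectral_radius_mem_max(2)[OF A n] by blast
  then show ?thesis using rho c by (simp add: norm_divide field_simps)
qed

lemma pow_mat_geometric_bound: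
  fixes A :: "complex mat"
  assumes A: "A \<in> carrier_mat n n" and n: "0 < n" and rho: "spectral_radius A < 1"
  obtains C q where "0 < q" "q < 1"
    "\<And>t i j. i < n \<Longrightarrow> j < n \<Longrightarrow> norm ((A ^\<^sub>m t) $$ (i, j)) \<le> C * q ^ t"
proof -
  txt \<open>Rescaling by \<open>1/q\<close> keeps the spectral radius below 1, where the Jordan normal form bounds
    all powers uniformly.\<close>
  define q where "q = (1 + spectral_radius A) / 2"
  have "0 \<le> spectral_radius A" using spectral_radius_mem_max(1)[OF A n] by auto
  then have q: "0 < q" "q < 1" "spectral_radius A < q" using rho by (auto simp: q_def)
  let ?B = "complex_of_real (1 / q) \<cdot>\<^sub>m A"
  have "spectral_radius ?B \<le> spectral_radius A / q"
    using spectral_radius_smult_le[OF A n, of "complex_of_real (1 / q)"] q by (simp add: norm_divide)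
  also have "\<dots> < 1" using q by simp
  finally obtain C where C: "\<And>t. norm_bound (?B ^\<^sub>m t) C"
    using spectral_radius_jnf_norm_bound_less_1_upper_triangular A by (metis smult_carrier_mat)
  show thesis
  proof (rule that[OF q(1,2)])
    fix t i j assume ij: "i < n" "j < n"
    have "norm ((A ^\<^sub>m t) $$ (i, j)) = q ^ t * norm ((?B ^\<^sub>m t) $$ (i, j))"
      using A ij q by (simp add: pow_mat_smult[OF A] norm_divide norm_power power_divide)
    also have "\<dots> \<le> q ^ t * C"
      using C[of t] A ij q unfolding norm_bound_def by (intro mult_left_mono) auto
    finally show "norm ((A ^\<^sub>m t) $$ (i, j)) \<le> C * q ^ t" by (simp add: mult.commute)
  qed
qed

lemma summable_pow_mat_index:
  fixes M :: "real mat"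
  assumes M: "M \<in> carrier_mat n n" and rho: "spectral_radius (map_mat complex_of_real M) < 1"
    and i: "i < n" and j: "j < n"
  shows "summable (\<lambda>t. (M ^\<^sub>m t) $$ (i, j))"
proof -
  have Mc: "map_mat complex_of_real M \<in> carrier_mat n n" using M by simp
  obtain C q where q: "0 < q" "q < 1"
    and C: "\<And>t. norm ((map_mat complex_of_real M ^\<^sub>m t) $$ (i, j)) \<le> C * q ^ t"
    using pow_mat_geometric_bound[OF Mc _ rho] i j by (metis not_gr0 not_less0)
  have bound: "norm ((M ^\<^sub>m t) $$ (i, j)) \<le> C * q ^ t" for t
    using C[of t] M i j by (simp add: of_real_hom.mat_hom_pow[OF M, symmetric])
  show ?thesis
    using q by (intro summable_comparison_test'[OF _ bound] summable_mult summable_geometric) simp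
qed

definition neumann_tail :: "real mat \<Rightarrow> real mat" where
  "neumann_tail M = mat (dim_row M) (dim_row M) (\<lambda>(i, j). \<Sum>t. (M ^\<^sub>m Suc t) $$ (i, j))"

lemma neumann_tail_carrier: "M \<in> carrier_mat n n \<Longrightarrow> neumann_tail M \<in> carrier_mat n n"
  by (simp add: neumann_tail_def)

lemma index_neumann_tail:
  "M \<in> carrier_mat n n \<Longrightarrow> i < n \<Longrightarrow> j < n \<Longrightarrow>
    neumann_tail M $$ (i, j) = (\<Sum>t. (M ^\<^sub>m Suc t) $$ (i, j))"
  by (simp add: neumann_tail_def del: pow_mat.simps)

lemma mult_neumann_tail:
  fixes M :: "real mat"
  assumes M: "M \<in> carrier_mat n n"
    and summable: "\<And>i j. i < n \<Longrightarrow> j < n \<Longrightarrow> summable (\<lambda>t. (M ^\<^sub>m t) $$ (i, j))"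
  shows "M * neumann_tail M = neumann_tail M - M"
proof (rule eq_matI)
  fix i j assume "i < dim_row (neumann_tail M - M)" "j < dim_col (neumann_tail M - M)"
  then have i: "i < n" and j: "j < n" using M neumann_tail_carrier[OF M] by auto
  have M_pow_1: "M ^\<^sub>m Suc 0 = M" using M by simp
  have summable_Suc: "summable (\<lambda>t. (M ^\<^sub>m Suc t) $$ (k, j))" if "k < n" for k
    by (subst summable_Suc_iff[where f = "\<lambda>t. (M ^\<^sub>m t) $$ (k, j)"]) (rule summable[OF that j])
  have "(M * neumann_tail M) $$ (i, j) = (\<Sum>k<n. M $$ (i, k) * (\<Sum>t. (M ^\<^sub>m Suc t) $$ (k, j)))"
    unfolding index_mult_mat_lessThan[OF M neumann_tail_carrier[OF M] i j]
    using M j by (intro sum.cong refl) (simp add: index_neumann_tail del: pow_mat.simps)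
  also have "\<dots> = (\<Sum>k<n. \<Sum>t. M $$ (i, k) * (M ^\<^sub>m Suc t) $$ (k, j))"
    using summable_Suc by (intro sum.cong refl suminf_mult[symmetric]) simp
  also have "\<dots> = (\<Sum>t. \<Sum>k<n. M $$ (i, k) * (M ^\<^sub>m Suc t) $$ (k, j))"
    using summable_Suc by (intro suminf_sum[symmetric] summable_mult) simp
  also have "\<dots> = (\<Sum>t. (M ^\<^sub>m Suc (Suc t)) $$ (i, j))"
    by (simp only: pow_mat_Suc_left[OF M, of "Suc _"] index_mult_mat_lessThan[OF M pow_carrier_mat[OF M] i j])
  also have "\<dots> = neumann_tail M $$ (i, j) - M $$ (i, j)"
    using suminf_split_head[OF summable_Suc[OF i]] M
    by (simp only: index_neumann_tail[OF M i j] M_pow_1)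
  finally show "(M * neumann_tail M) $$ (i, j) = (neumann_tail M - M) $$ (i, j)"
    using M i j neumann_tail_carrier[OF M] by (simp del: pow_mat.simps)
qed (use M neumann_tail_carrier[OF M] in \<open>simp_all del: pow_mat.simps\<close>)

lemma mat_inverse_one_minus:
  fixes M :: "real mat"
  assumes M: "M \<in> carrier_mat n n"
    and summable: "\<And>i j. i < n \<Longrightarrow> j < n \<Longrightarrow> summable (\<lambda>t. (M ^\<^sub>m t) $$ (i, j))"
  shows "mat_inverse (1\<^sub>m n - M) = Some (1\<^sub>m n + neumann_tail M)"
proof -
  let ?N = "neumann_tail M"
  have N: "?N \<in> carrier_mat n n" using neumann_tail_carrier[OF M] .
  have IM: "1\<^sub>m n - M \<in> carrier_mat n n" and IN: "1\<^sub>m n + ?N \<in> carrier_mat n n" using M N by auto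
  have "(1\<^sub>m n - M) * (1\<^sub>m n + ?N) = (1\<^sub>m n + ?N) - (M + M * ?N)"
    using M N by (simp add: minus_mult_distrib_mat[OF one_carrier_mat M IN] mult_add_distrib_mat[OF M one_carrier_mat N])
  also have "\<dots> = 1\<^sub>m n"
    using M N by (auto simp: mult_neumann_tail[OF M summable] intro!: eq_matI)
  finally have right_inv: "(1\<^sub>m n - M) * (1\<^sub>m n + ?N) = 1\<^sub>m n" .
  have left_inv: "(1\<^sub>m n + ?N) * (1\<^sub>m n - M) = 1\<^sub>m n"
    by (rule mat_mult_left_right_inverse[OF IM IN right_inv])
  show ?thesis
  proof (cases "mat_inverse (1\<^sub>m n - M)")
    case None
    then have "1\<^sub>m n - M \<notin> Units (ring_mat TYPE(real) n undefined)" by (rule mat_inverse(1)[OF IM])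
    moreover have "1\<^sub>m n - M \<in> Units (ring_mat TYPE(real) n undefined)"
      using IM IN right_inv left_inv unfolding Units_def ring_mat_def by auto
    ultimately show ?thesis by contradiction
  next
    case (Some B)
    then have B: "B * (1\<^sub>m n - M) = 1\<^sub>m n" "B \<in> carrier_mat n n" using mat_inverse(2)[OF IM] by auto
    have "B = B * ((1\<^sub>m n - M) * (1\<^sub>m n + ?N))" using right_inv B by simp
    also have "\<dots> = (B * (1\<^sub>m n - M)) * (1\<^sub>m n + ?N)" using assoc_mult_mat[OF B(2) IM IN] by simp
    also have "\<dots> = 1\<^sub>m n + ?N" using B left_mult_one_mat[OF IN] by simp
    finally show ?thesis using Some by simp
  qed
qed

lemma summable_smult_pow_mat_index:
  fixes W :: "real mat"
  assumes W: "W \<in> carrier_mat n n" and a: "0 < a"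
    and rho: "a * spectral_radius (map_mat complex_of_real W) < 1" and i: "i < n" and j: "j < n"
  shows "summable (\<lambda>t. ((a \<cdot>\<^sub>m W) ^\<^sub>m t) $$ (i, j))"
proof (rule summable_pow_mat_index[OF _ _ i j])
  show "a \<cdot>\<^sub>m W \<in> carrier_mat n n" using W by simp
  have "map_mat complex_of_real (a \<cdot>\<^sub>m W) = complex_of_real a \<cdot>\<^sub>m map_mat complex_of_real W"
    by (auto intro!: eq_matI)
  then show "spectral_radius (map_mat complex_of_real (a \<cdot>\<^sub>m W)) < 1"
    using spectral_radius_smult_le[of "map_mat complex_of_real W" n "complex_of_real a"] W a rho i
    by auto
qed

lemma katz_index:
  fixes W :: "real mat"
  assumes W: "W \<in> carrier_mat n n" and \<gamma>: "\<gamma> < 1"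
    and rho: "(1 - \<gamma>) * spectral_radius (map_mat complex_of_real W) < 1" and i: "i < n"
  shows "katz W \<gamma> $ i = (\<Sum>j<n. neumann_tail ((1 - \<gamma>) \<cdot>\<^sub>m W) $$ (i, j))"
proof -
  have "mat_inverse (1\<^sub>m n - (1 - \<gamma>) \<cdot>\<^sub>m W) = Some (1\<^sub>m n + neumann_tail ((1 - \<gamma>) \<cdot>\<^sub>m W))"
    using W \<gamma> by (intro mat_inverse_one_minus summable_smult_pow_mat_index[OF W _ rho]) auto
  moreover have "neumann_tail ((1 - \<gamma>) \<cdot>\<^sub>m W) \<in> carrier_mat n n"
    using W by (intro neumann_tail_carrier) simp
  ultimately show ?thesis
    using W i by (simp add: katz_def scalar_prod_def atLeast0LessThan)
qed

lemma katz_nonneg: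
  fixes W :: "real mat"
  assumes W: "W \<in> carrier_mat n n" and W_nonneg: "\<And>i j. i < n \<Longrightarrow> j < n \<Longrightarrow> 0 \<le> W $$ (i, j)"
    and \<gamma>: "\<gamma> < 1" and rho: "(1 - \<gamma>) * spectral_radius (map_mat complex_of_real W) < 1"
    and i: "i < n"
  shows "0 \<le> katz W \<gamma> $ i"
proof -
  let ?M = "(1 - \<gamma>) \<cdot>\<^sub>m W"
  have M: "?M \<in> carrier_mat n n" using W by simp
  have tail_nonneg: "0 \<le> neumann_tail ?M $$ (i, j)" if j: "j < n" for j
  proof -
    have "summable (\<lambda>t. (?M ^\<^sub>m Suc t) $$ (i, j))"
      using summable_smult_pow_mat_index[OF W _ rho i j] \<gamma>
      by (subst summable_Suc_iff[where f = "\<lambda>t. (?M ^\<^sub>m t) $$ (i, j)"]) simp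
    moreover have "0 \<le> (?M ^\<^sub>m Suc t) $$ (i, j)" for t
      using W W_nonneg \<gamma> by (intro pow_mat_nonneg[OF M _ i j]) auto
    ultimately show ?thesis
      unfolding index_neumann_tail[OF M i j] by (intro suminf_nonneg)
  qed
  then show ?thesis unfolding katz_index[OF W \<gamma> rho i] by (intro sum_nonneg) simp
qed

lemma gip_score_eq_katz:
  fixes W :: "real mat"
  assumes W: "W \<in> carrier_mat n n" and W_nonneg: "\<And>i j. i < n \<Longrightarrow> j < n \<Longrightarrow> 0 \<le> W $$ (i, j)"
    and l0_nonneg: "\<And>i. i < n \<Longrightarrow> 0 \<le> l i 0" and h0_nonneg: "\<And>i. i < n \<Longrightarrow> 0 \<le> h i 0"
    and regime: "gip_linear_regime n W l h" and x: "gip_admissible n l h x"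
    and \<gamma>: "\<gamma> < 1" and rho: "(1 - \<gamma>) * spectral_radius (map_mat complex_of_real W) < 1"
  shows "(\<forall>j<n. summable (\<lambda>t. (1 - \<gamma>) ^ Suc t * gip_traj W l h x (Suc t) j))"
    and "gip_score W l h \<gamma> x = (\<Sum>j<n. katz W \<gamma> $ j * x j)"
proof -
  let ?M = "(1 - \<gamma>) \<cdot>\<^sub>m W"
  have M: "?M \<in> carrier_mat n n" using W by simp
  have summable: "summable (\<lambda>t. (?M ^\<^sub>m Suc t) $$ (i, j))" if "i < n" "j < n" for i j
    using summable_smult_pow_mat_index[OF W _ rho that] \<gamma>
    by (subst summable_Suc_iff[where f = "\<lambda>t. (?M ^\<^sub>m t) $$ (i, j)"]) simp
  have damped: "(1 - \<gamma>) ^ t * gip_traj W l h x t j = (\<Sum>i<n. (?M ^\<^sub>m t) $$ (i, j) * x i)"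
    if j: "j < n" for t j
    using gip_traj_linear[OF W W_nonneg l0_nonneg h0_nonneg regime x j] W j
    by (simp add: pow_mat_smult[OF W] sum_distrib_left ac_simps del: pow_mat.simps)
  show "\<forall>j<n. summable (\<lambda>t. (1 - \<gamma>) ^ Suc t * gip_traj W l h x (Suc t) j)"
  proof (intro allI impI)
    fix j assume "j < n"
    then show "summable (\<lambda>t. (1 - \<gamma>) ^ Suc t * gip_traj W l h x (Suc t) j)"
      unfolding damped[OF \<open>j < n\<close>] using summable by (intro summable_sum summable_mult2) simp
  qed
  have "gip_score W l h \<gamma> x = (\<Sum>j<n. \<Sum>t. (1 - \<gamma>) ^ Suc t * gip_traj W l h x (Suc t) j)"
    using W by (simp add: gip_score_def)
  also have "\<dots> = (\<Sum>j<n. \<Sum>t. \<Sum>i<n. (?M ^\<^sub>m Suc t) $$ (i, j) * x i)"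
    by (intro sum.cong refl suminf_cong damped) simp
  also have "\<dots> = (\<Sum>j<n. \<Sum>i<n. \<Sum>t. (?M ^\<^sub>m Suc t) $$ (i, j) * x i)"
    using summable by (intro sum.cong refl suminf_sum summable_mult2) simp
  also have "\<dots> = (\<Sum>j<n. \<Sum>i<n. neumann_tail ?M $$ (i, j) * x i)"
    using summable by (intro sum.cong refl) (simp add: index_neumann_tail[OF M] suminf_mult2)
  also have "\<dots> = (\<Sum>i<n. katz W \<gamma> $ i * x i)"
    by (subst sum.swap) (simp add: katz_index[OF W \<gamma> rho] sum_distrib_right)
  finally show "gip_score W l h \<gamma> x = (\<Sum>j<n. katz W \<gamma> $ j * x j)" .
qed

lemma sum_le_sum_of_top:
  fixes f :: "'a \<Rightarrow> 'b::linordered_semidom"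
  assumes fin: "finite A" "finite S" and card: "card S \<le> card A"
    and nonneg: "\<And>j. j \<in> A - S \<Longrightarrow> 0 \<le> f j"
    and top: "\<And>i j. i \<in> S - A \<Longrightarrow> j \<in> A - S \<Longrightarrow> f i \<le> f j"
  shows "sum f S \<le> sum f A"
proof -
  have "card S = card (S \<inter> A) + card (S - A)" using fin(2) by (rule card_Int_Diff)
  moreover have "card A = card (S \<inter> A) + card (A - S)"
    using card_Int_Diff[OF fin(1), of S] by (simp add: Int_commute)
  ultimately have card_diff: "card (S - A) \<le> card (A - S)" using card by linarith
  have "sum f (S - A) \<le> sum f (A - S)"
  proof (cases "S - A = {}")
    case True
    show ?thesis unfolding True sum.empty using nonneg by (intro sum_nonneg)
  next
    case False
    then have ne: "A - S \<noteq> {}" using card_diff fin by (metis card_0_eq finite_Diff le_zero_eq)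
    define m where "m = Min (f ` (A - S))"
    have fin_img: "finite (f ` (A - S))" using fin by simp
    have "m \<in> f ` (A - S)" unfolding m_def using fin_img ne by (intro Min_in) auto
    then have m_nonneg: "0 \<le> m" using nonneg by auto
    have "sum f (S - A) \<le> of_nat (card (S - A)) * m"
    proof (rule sum_bounded_above)
      fix i assume "i \<in> S - A"
      then show "f i \<le> m" unfolding m_def using fin_img ne top by (subst Min_ge_iff) auto
    qed
    also have "\<dots> \<le> of_nat (card (A - S)) * m" using card_diff m_nonneg by (intro mult_right_mono) auto
    also have "\<dots> \<le> sum f (A - S)"
      by (rule sum_bounded_below) (use fin_img in \<open>simp add: m_def\<close>)
    finally show ?thesis .
  qed
  moreover have "sum f S = sum f (S \<inter> A) + sum f (S - A)" using fin(2) by (rule sum.Int_Diff)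
  moreover have "sum f A = sum f (S \<inter> A) + sum f (A - S)"
    using sum.Int_Diff[OF fin(1), of f S] by (simp add: Int_commute)
  ultimately show ?thesis by (simp add: add_left_mono)
qed

lemma gip_feasible_imp_admissible: "gip_feasible n l h k x z \<Longrightarrow> gip_admissible n l h x"
  unfolding gip_feasible_def gip_admissible_def by fastforce

lemma sum_indicator_lessThan:
  "B \<subseteq> {..<n::nat} \<Longrightarrow> (\<Sum>j<n. if j \<in> B then 1 else 0) = (of_nat (card B) :: 'a::semiring_1)"
  by (simp add: sum.If_cases Int_absorb1)

lemma gip_feasible_top_seed:
  assumes A: "A \<subseteq> {..<n}" "card A = k" and l_le_h: "\<And>j. j < n \<Longrightarrow> l j 0 \<le> h j 0"
  shows "gip_feasible n l h k (\<lambda>j. if j \<in> A then h j 0 else 0) (\<lambda>j. if j \<in> A then 1 else 0)"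
  unfolding gip_feasible_def using A l_le_h sum_indicator_lessThan[OF A(1), where 'a = real] by auto

lemma gip_feasible_card_support:
  assumes feasible: "gip_feasible n l h k x z"
  shows "card {j. j < n \<and> z j = 1} \<le> k"
proof -
  define S where "S = {j. j < n \<and> z j = 1}"
  have S: "S \<subseteq> {..<n}" unfolding S_def by auto
  have "(\<Sum>j<n. z j) = (\<Sum>j<n. if j \<in> S then 1 else 0)"
    using feasible unfolding gip_feasible_def S_def by (intro sum.cong refl) auto
  also have "\<dots> = real (card S)" by (rule sum_indicator_lessThan[OF S])
  finally show ?thesis using feasible unfolding gip_feasible_def S_def by simp
qed

lemma linear_objective_le_top_seed:
  fixes c :: "nat \<Rightarrow> real"
  assumes feasible: "gip_feasible n l h k x z" and A: "A \<subseteq> {..<n}" "card A = k"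
    and c_nonneg: "\<And>j. j < n \<Longrightarrow> 0 \<le> c j" and h0_nonneg: "\<And>j. j < n \<Longrightarrow> 0 \<le> h j 0"
    and top: "\<And>i j. i < n \<Longrightarrow> j \<in> A \<Longrightarrow> i \<notin> A \<Longrightarrow> h i 0 * c i \<le> h j 0 * c j"
  shows "(\<Sum>j<n. c j * x j) \<le> (\<Sum>j<n. c j * (if j \<in> A then h j 0 else 0))"
proof -
  define S where "S = {j. j < n \<and> z j = 1}"
  have S: "S \<subseteq> {..<n}" unfolding S_def by auto
  have z: "\<And>j. j < n \<Longrightarrow> z j = (if j \<in> S then 1 else 0)" and
    x: "\<And>j. j < n \<Longrightarrow> l j 0 * z j \<le> x j \<and> x j \<le> h j 0 * z j"
    using feasible unfolding gip_feasible_def S_def by auto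
  have card: "card S \<le> card A" using gip_feasible_card_support[OF feasible] A(2) unfolding S_def by simp
  have "c j * x j \<le> (if j \<in> S then h j 0 * c j else 0)" if j: "j < n" for j
  proof (cases "j \<in> S")
    case True
    then show ?thesis using x[OF j] z[OF j] c_nonneg[OF j] by (simp add: mult.commute mult_left_mono)
  next
    case False
    then have "x j = 0" using x[OF j] z[OF j] by simp
    then show ?thesis using False by simp
  qed
  then have "(\<Sum>j<n. c j * x j) \<le> (\<Sum>j<n. if j \<in> S then h j 0 * c j else 0)"
    by (intro sum_mono) simp
  also have "\<dots> = (\<Sum>j\<in>S. h j 0 * c j)" using S by (simp add: sum.If_cases Int_absorb1)
  also have "\<dots> \<le> (\<Sum>j\<in>A. h j 0 * c j)"
  proof (rule sum_le_sum_of_top[OF _ _ card])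
    show "finite A" "finite S" using A(1) S by (auto intro: finite_subset)
    show "0 \<le> h j 0 * c j" if "j \<in> A - S" for j
      using that A(1) c_nonneg h0_nonneg by auto
    show "h i 0 * c i \<le> h j 0 * c j" if "i \<in> S - A" "j \<in> A - S" for i j
      using that S top by auto
  qed
  also have "\<dots> = (\<Sum>j<n. if j \<in> A then h j 0 * c j else 0)"
    using A(1) by (simp add: sum.If_cases Int_absorb1)
  also have "\<dots> = (\<Sum>j<n. c j * (if j \<in> A then h j 0 else 0))" by (intro sum.cong) auto
  finally show ?thesis .
qed

theorem theorem5:
  fixes W :: "real mat" and n k :: nat and l h :: "nat \<Rightarrow> nat \<Rightarrow> real"
    and \<gamma> :: real and A :: "nat set"
  assumes W: "W \<in> carrier_mat n n"
    and W_nonneg: "\<forall>i<n. \<forall>j<n. W $$ (i, j) \<ge> 0"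
    and bounds: "\<forall>j<n. \<forall>t. 0 \<le> l j t \<and> l j t \<le> h j t"
    and l0_pos: "\<forall>j<n. l j 0 > 0"
    and regime: "\<forall>t>0. \<forall>j<n.
        l j t \<le> Min {l i 0 | i. i < n} * min_edge_weight W ^ t \<and>
        Min {l i 0 | i. i < n} * min_edge_weight W ^ t \<le> (\<Sum>i<n. h i 0 * (W ^\<^sub>m t) $$ (i, j)) \<and>
        (\<Sum>i<n. h i 0 * (W ^\<^sub>m t) $$ (i, j)) \<le> h j t"
    and gamma: "0 \<le> \<gamma>" "\<gamma> < 1"
    and gamma_rho: "(1 - \<gamma>) * spectral_radius (map_mat complex_of_real W) < 1"
    and k: "1 \<le> k" "k \<le> n"
    and A: "A \<subseteq> {..<n}" "card A = k"
    and A_top: "\<forall>i<n. \<forall>j\<in>A. i \<notin> A \<longrightarrow>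
        h i 0 * katz W \<gamma> $ i \<le> h j 0 * katz W \<gamma> $ j"
  shows "gip_feasible n l h k (\<lambda>j. if j \<in> A then h j 0 else 0) (\<lambda>j. if j \<in> A then 1 else 0)
       \<and> (\<forall>x z. gip_feasible n l h k x z \<longrightarrow>
            gip_score W l h \<gamma> x \<le> gip_score W l h \<gamma> (\<lambda>j. if j \<in> A then h j 0 else 0))
       \<and> (\<forall>x z. gip_feasible n l h k x z \<longrightarrow>
            (\<forall>j<n. summable (\<lambda>t. (1 - \<gamma>) ^ Suc t * gip_traj W l h x (Suc t) j)) \<and>
            gip_score W l h \<gamma> x = (\<Sum>j<n. katz W \<gamma> $ j * x j))"
proof -
  let ?x = "\<lambda>j. if j \<in> A then h j 0 else 0"
  have l0: "\<And>j. j < n \<Longrightarrow> 0 \<le> l j 0" and l_le_h: "\<And>j. j < n \<Longrightarrow> l j 0 \<le> h j 0"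
    using bounds by blast+
  have h0: "\<And>j. j < n \<Longrightarrow> 0 \<le> h j 0" using l0 l_le_h by (meson order_trans)
  have linear: "gip_linear_regime n W l h" using regime unfolding gip_linear_regime_def by blast
  have score: "gip_score W l h \<gamma> x = (\<Sum>j<n. katz W \<gamma> $ j * x j)" if "gip_admissible n l h x" for x
    using gip_score_eq_katz(2)[OF W _ _ _ linear that gamma(2) gamma_rho] W_nonneg l0 h0 by blast
  have summable: "\<forall>j<n. summable (\<lambda>t. (1 - \<gamma>) ^ Suc t * gip_traj W l h x (Suc t) j)"
    if "gip_admissible n l h x" for x
    using gip_score_eq_katz(1)[OF W _ _ _ linear that gamma(2) gamma_rho] W_nonneg l0 h0 by blast
  have c_nonneg: "\<And>j. j < n \<Longrightarrow> 0 \<le> katz W \<gamma> $ j"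
    using katz_nonneg[OF W _ gamma(2) gamma_rho] W_nonneg by blast
  have top_feasible: "gip_feasible n l h k ?x (\<lambda>j. if j \<in> A then 1 else 0)"
    using A l_le_h by (rule gip_feasible_top_seed)
  have optimal: "gip_score W l h \<gamma> x \<le> gip_score W l h \<gamma> ?x" if "gip_feasible n l h k x z" for x z
  proof -
    have "(\<Sum>j<n. katz W \<gamma> $ j * x j) \<le> (\<Sum>j<n. katz W \<gamma> $ j * ?x j)"
      by (rule linear_objective_le_top_seed[OF that A]) (use c_nonneg h0 A_top in auto)
    then show ?thesis
      using score gip_feasible_imp_admissible that top_feasible by metis
  qed
  show ?thesis
    using top_feasible optimal summable score gip_feasible_imp_admissible by blast
qed

end
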